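(* In the max-plus semiring $\mathbb{Q}_{\max}$, the set $$\mathscr{S}=\big\{(u_1,v_1,u_2,v_2)\in\mathbb{Q}_{\max}^4:\ \forall k\in\mathbb{N},\ \max(u_1+kv_1,\ u_2+kv_2)\ge0\big\}$$ (i.e. the set of evaluations $(u_1,v_1,u_2,v_2)$ for which $u_1(v_1X)^*\oplus u_2(v_2X)^*\ge(0X)^*$ coefficientwise) is not semi-polyhedral.
   Context: $\mathbb{Q}_{\max}$ is $\mathbb{Q}\cup\{-\infty\}$ with $a\oplus b=\max(a,b)$ and $a\otimes b=a+b$; the term $u+kv$ denotes the max-plus product $u\otimes v^{\otimes k}$ (with $v^{\otimes 0}=0$, the unit), and the order is the usual order with $-\infty$ smallest. A monomial on $\mathbb{Q}_{\max}^4$ is $m(x)=a\otimes x_1^{\otimes\alpha_1}\otimes\cdots\otimes x_4^{\otimes\alpha_4}$ with $a\in\mathbb{Q}_{\max}$, $\alpha_i\in\mathbb{N}$ (in usual notation $a+\sum_i\alpha_ix_i$); a half-space is $\{x:m(x)\ge m'(x)\}$ for monomials $m,m'$; a polyhedron is a finite intersection of half-spaces; a semi-polyhedral set is a finite union of polyhedra. *)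

theory Defs
  imports Main "HOL.Rat"
begin

datatype qmax = NegInf | Fin rat

fun qle :: "qmax \<Rightarrow> qmax \<Rightarrow> bool" where
  "qle NegInf _ = True"
| "qle (Fin a) NegInf = False"
| "qle (Fin a) (Fin b) = (a \<le> b)"

fun qplus :: "qmax \<Rightarrow> qmax \<Rightarrow> qmax" where
  "qplus NegInf y = y"
| "qplus x NegInf = x"
| "qplus (Fin a) (Fin b) = Fin (max a b)"

fun qtimes :: "qmax \<Rightarrow> qmax \<Rightarrow> qmax" where
  "qtimes NegInf _ = NegInf"
| "qtimes _ NegInf = NegInf"
| "qtimes (Fin a) (Fin b) = Fin (a + b)"

text \<open>Max-plus power; v^0 = 0 (the unit Fin 0), also for v = -\<infinity>.\<close>
fun qpow :: "qmax \<Rightarrow> nat \<Rightarrow> qmax" where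
  "qpow v 0 = Fin 0"
| "qpow v (Suc k) = qtimes v (qpow v k)"

type_synonym point4 = "qmax \<times> qmax \<times> qmax \<times> qmax"

text \<open>A monomial a \<otimes> x1^a1 \<otimes> x2^a2 \<otimes> x3^a3 \<otimes> x4^a4 is given by (a, a1, a2, a3, a4).\<close>
type_synonym monomial4 = "qmax \<times> nat \<times> nat \<times> nat \<times> nat"

fun mono_eval :: "monomial4 \<Rightarrow> point4 \<Rightarrow> qmax" where
  "mono_eval (a, a1, a2, a3, a4) (x1, x2, x3, x4) =
     qtimes a (qtimes (qpow x1 a1) (qtimes (qpow x2 a2) (qtimes (qpow x3 a3) (qpow x4 a4))))"

definition half_space :: "monomial4 \<Rightarrow> monomial4 \<Rightarrow> point4 set" where
  "half_space m m' = {x. qle (mono_eval m' x) (mono_eval m x)}"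

definition polyhedron :: "point4 set \<Rightarrow> bool" where
  "polyhedron P \<longleftrightarrow> (\<exists>H :: (monomial4 \<times> monomial4) set. finite H \<and>
       P = (\<Inter>(m, m') \<in> H. half_space m m'))"

definition semi_polyhedral :: "point4 set \<Rightarrow> bool" where
  "semi_polyhedral S \<longleftrightarrow> (\<exists>F :: point4 set set. finite F \<and> (\<forall>P \<in> F. polyhedron P) \<and> S = \<Union>F)"

definition Sset :: "point4 set" where
  "Sset = {(u1, v1, u2, v2). \<forall>k::nat.
      qle (Fin 0) (qplus (qtimes u1 (qpow v1 k)) (qtimes u2 (qpow v2 k)))}"

end

theory Submission
  imports Defs
begin

(* Consider the rational line  a \<mapsto> probe a = (-(a+1), 1, a, -1)  in Q_max^4.
   Every monomial, evaluated along this line, is either constantly -\<infinity> or an affine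
   function of a; hence every half-space, and therefore every polyhedron, meets the line in
   an order-convex set of parameters.  On the other hand the line meets S exactly in a
   "gappy" set: probe n \<in> S for every natural n (for k \<le> n the second term
   n - k is \<ge> 0, for k > n the first term k - n - 1 is \<ge> 0), while
   probe (n + 1/2) \<notin> S (take k = n + 1).  If S were a finite union of polyhedra, by
   pigeonhole one polyhedron would contain probe i and probe j for some naturals i < j,
   hence by convexity probe (i + 1/2) \<in> S, a contradiction. *)

lemma qpow_Fin: "qpow (Fin x) k = Fin (of_nat k * x)"
  by (induction k) (auto simp: algebra_simps)

definition probe :: "rat \<Rightarrow> point4" where
  "probe a = (Fin (-(a + 1)), Fin 1, Fin a, Fin (-1))"

lemma mono_eval_probe_Fin:
  "mono_eval (Fin c, a1, a2, a3, a4) (probe a) =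
     Fin ((c - of_nat a1 + of_nat a2 - of_nat a4) + (of_nat a3 - of_nat a1) * a)"
  by (simp add: probe_def qpow_Fin algebra_simps)

lemma mono_eval_probe_NegInf: "mono_eval (NegInf, a1, a2, a3, a4) (probe a) = NegInf"
  by (simp add: probe_def)

definition ord_convex :: "rat set \<Rightarrow> bool" where
  "ord_convex A \<longleftrightarrow> (\<forall>x y z. x \<in> A \<longrightarrow> y \<in> A \<longrightarrow> x \<le> z \<longrightarrow> z \<le> y \<longrightarrow> z \<in> A)"

lemma ord_convex_UNIV: "ord_convex UNIV"
  by (simp add: ord_convex_def)

lemma ord_convex_Inter: "(\<And>A. A \<in> \<A> \<Longrightarrow> ord_convex A) \<Longrightarrow> ord_convex (\<Inter>\<A>)"
  unfolding ord_convex_def by blast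

(* The region where one affine function dominates another is order-convex, because their
   difference is affine and hence monotone. *)
lemma ord_convex_affine_le:
  fixes c s c' s' :: rat
  shows "ord_convex {a. c' + s' * a \<le> c + s * a}"
  unfolding ord_convex_def
proof (intro allI impI, simp)
  fix x y z :: rat
  assume x: "c' + s' * x \<le> c + s * x" and y: "c' + s' * y \<le> c + s * y"
    and xz: "x \<le> z" and zy: "z \<le> y"
  show "c' + s' * z \<le> c + s * z"
  proof (cases "s - s' \<ge> 0")
    case True
    then have "(s - s') * x \<le> (s - s') * z" using xz by (simp add: mult_left_mono)
    then show ?thesis using x by (simp add: algebra_simps)
  next
    case False
    then have "(s - s') * y \<le> (s - s') * z" using zy by (simp add: mult_left_mono_neg)
    then show ?thesis using y by (simp add: algebra_simps)
  qed
qed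

lemma half_space_probe_convex: "ord_convex {a. probe a \<in> half_space m m'}"
proof -
  obtain c a1 a2 a3 a4 where m: "m = (c, a1, a2, a3, a4)" by (cases m) auto
  obtain c' b1 b2 b3 b4 where m': "m' = (c', b1, b2, b3, b4)" by (cases m') auto
  show ?thesis
  proof (cases c')
    case NegInf
    then have "{a. probe a \<in> half_space m m'} = UNIV"
      by (simp add: half_space_def m m' mono_eval_probe_NegInf)
    then show ?thesis by (simp add: ord_convex_UNIV)
  next
    case (Fin d')
    show ?thesis
    proof (cases c)
      case NegInf
      then have "{a. probe a \<in> half_space m m'} = {}"
        using Fin by (simp add: half_space_def m m' mono_eval_probe_NegInf mono_eval_probe_Fin)
      then show ?thesis by (simp add: ord_convex_def)
    next
      case (Fin d)
      then show ?thesis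
        using \<open>c' = Fin d'\<close> ord_convex_affine_le
        by (simp add: half_space_def m m' mono_eval_probe_Fin)
    qed
  qed
qed

lemma polyhedron_probe_convex:
  assumes "polyhedron P"
  shows "ord_convex {a. probe a \<in> P}"
proof -
  obtain H where P: "P = (\<Inter>(m, m') \<in> H. half_space m m')"
    using assms unfolding polyhedron_def by blast
  have "{a. probe a \<in> P} = \<Inter>((\<lambda>(m, m'). {a. probe a \<in> half_space m m'}) ` H)"
    unfolding P by auto
  then show ?thesis
    by (auto intro!: ord_convex_Inter simp: half_space_probe_convex)
qed

(* Integer parameters lie in S: for k \<le> n the second term n - k is nonnegative,
   for k > n the first term k - n - 1 is. *)
lemma probe_nat_in_Sset: "probe (of_nat n) \<in> Sset"
proof -
  have "0 \<le> max (of_nat k - (of_nat n + 1)) (of_nat n - of_nat k :: rat)" for k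
  proof (cases "k \<le> n")
    case False
    then have "of_nat (n + 1) \<le> (of_nat k :: rat)" by (simp only: of_nat_le_iff)
    then show ?thesis by simp
  qed simp
  then show ?thesis by (simp add: Sset_def probe_def qpow_Fin algebra_simps)
qed

(* Half-integer parameters do not: at k = n + 1 both terms equal -1/2. *)
lemma probe_half_notin_Sset: "probe (of_nat n + 1/2) \<notin> Sset"
proof -
  have "\<not> qle (Fin 0) (qplus (qtimes (Fin (-(of_nat n + 1/2 + 1))) (qpow (Fin 1) (Suc n)))
           (qtimes (Fin (of_nat n + 1/2)) (qpow (Fin (-1)) (Suc n))))"
    by (simp add: qpow_Fin algebra_simps)
  then show ?thesis unfolding Sset_def probe_def by blast
qed

lemma finite_cover_two_indices:
  assumes "finite F" and "\<And>n::nat. \<exists>P\<in>F. g n \<in> P"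
  obtains P i j where "P \<in> F" "i < j" "g i \<in> P" "g j \<in> P"
proof -
  obtain f where f: "\<And>n. f n \<in> F \<and> g n \<in> f n" using assms(2) by metis
  have "finite (range f)" using f assms(1) by (meson finite_subset image_subsetI)
  then have "\<not> inj f" using finite_imageD by blast
  then obtain i j where "f i = f j" "i \<noteq> j" unfolding inj_def by blast
  then show ?thesis using that f by (metis linorder_neqE_nat)
qed

theorem mainTheorem14:
  shows "\<not> semi_polyhedral Sset"
proof
  assume "semi_polyhedral Sset"
  then obtain F where F: "finite F" "\<forall>P\<in>F. polyhedron P" "Sset = \<Union>F"
    unfolding semi_polyhedral_def by blast
  have "\<exists>P\<in>F. probe (of_nat n) \<in> P" for n
    using probe_nat_in_Sset F(3) by blast
  then obtain P i j where P: "P \<in> F" "i < j" "probe (of_nat i) \<in> P" "probe (of_nat j) \<in> P"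
    by (rule finite_cover_two_indices[OF F(1)])
  have "ord_convex {a. probe a \<in> P}"
    using P(1) F(2) polyhedron_probe_convex by blast
  moreover have "of_nat i \<le> of_nat i + (1/2 :: rat)" "of_nat i + 1/2 \<le> (of_nat j :: rat)"
    using P(2) by (simp_all add: of_nat_less_iff[symmetric] del: of_nat_less_iff)
  ultimately have "probe (of_nat i + 1/2) \<in> P"
    using P(3,4) unfolding ord_convex_def by blast
  then show False
    using P(1) F(3) probe_half_notin_Sset by blast
qed

end
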